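(* Let $\mathcal{X}$ be a measurable space, $\mathcal{G}$ a class of measurable classifiers $g:\mathcal{X}\to\{-1,+1\}$, and $p\in(0,1)$ a known number. Let $(X'_1,Y'_1),\ldots,(X'_n,Y'_n)$ be i.i.d. copies of a pair $(X',Y')$ valued in $\mathcal{X}\times\{-1,+1\}$ with $p'=\mathbb{P}\{Y'=+1\}$. Let $\varepsilon\in(0,1/2)$ and suppose $p'\in(\varepsilon,1-\varepsilon)$. Define, for $g\in\mathcal{G}$, $$\widetilde{\mathcal{R}}_{w^*,n}(g)=\frac{p}{p'}\frac{1}{n}\sum_{i:Y'_i=+1}\mathbb{I}\{g(X'_i)=-1\}+\frac{1-p}{1-p'}\frac{1}{n}\sum_{i:Y'_i=-1}\mathbb{I}\{g(X'_i)=+1\},$$ $$\widetilde{\mathcal{R}}_{\widehat{w}^*,n}(g)=\frac{p}{n'_+}\sum_{i:Y'_i=+1}\mathbb{I}\{g(X'_i)=-1\}+\frac{1-p}{n'_-}\sum_{i:Y'_i=-1}\mathbb{I}\{g(X'_i)=+1\},$$ where $n'_+=\sum_{i=1}^n\mathbb{I}\{Y'_i=+1\}$ and $n'_-=n-n'_+$. Then for any $\delta\in(0,1)$, as soon as $n\ge 2\log(2/\delta)/\varepsilon^2$, with probability larger than $1-\delta$, $$\sup_{g\in\mathcal{G}}\left|\widetilde{\mathcal{R}}_{\widehat{w}^*,n}(g)-\widetilde{\mathcal{R}}_{w^*,n}(g)\right|\le\frac{2}{\varepsilon^2}\sqrt{\frac{\log(2/\delta)}{2n}}.$$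
   Context: $\mathbb{I}\{\cdot\}$ denotes the indicator function. *)

theory Defs
  imports "HOL-Probability.Probability"
begin

definition npos :: "nat \<Rightarrow> (nat \<Rightarrow> 'w \<Rightarrow> int) \<Rightarrow> 'w \<Rightarrow> nat" where
  "npos n Y \<omega> = card {i \<in> {..<n}. Y i \<omega> = 1}"

definition risk_w :: "nat \<Rightarrow> real \<Rightarrow> real \<Rightarrow> (nat \<Rightarrow> 'w \<Rightarrow> 'a) \<Rightarrow> (nat \<Rightarrow> 'w \<Rightarrow> int)
    \<Rightarrow> ('a \<Rightarrow> int) \<Rightarrow> 'w \<Rightarrow> real" where
  "risk_w n p p' X Y g \<omega> =
     p / p' * (1 / real n) * (\<Sum>i \<in> {i \<in> {..<n}. Y i \<omega> = 1}. (if g (X i \<omega>) = -1 then 1 else 0))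
   + (1 - p) / (1 - p') * (1 / real n) * (\<Sum>i \<in> {i \<in> {..<n}. Y i \<omega> = -1}. (if g (X i \<omega>) = 1 then 1 else 0))"

definition risk_what :: "nat \<Rightarrow> real \<Rightarrow> (nat \<Rightarrow> 'w \<Rightarrow> 'a) \<Rightarrow> (nat \<Rightarrow> 'w \<Rightarrow> int)
    \<Rightarrow> ('a \<Rightarrow> int) \<Rightarrow> 'w \<Rightarrow> real" where
  "risk_what n p X Y g \<omega> =
     p / real (npos n Y \<omega>) * (\<Sum>i \<in> {i \<in> {..<n}. Y i \<omega> = 1}. (if g (X i \<omega>) = -1 then 1 else 0))
   + (1 - p) / real (n - npos n Y \<omega>) * (\<Sum>i \<in> {i \<in> {..<n}. Y i \<omega> = -1}. (if g (X i \<omega>) = 1 then 1 else 0))"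

end

theory Submission
  imports Defs
begin

text \<open>By Hoeffding's inequality, with probability at least \<open>1 - \<delta>\<close> the empirical frequency
  \<open>n'\<^sub>+ / n\<close> of positive labels is within \<open>t = sqrt (ln (2 / \<delta>) / (2 n))\<close> of \<open>p'\<close>.
  On that event the comparison is deterministic and uniform in \<open>g\<close>: replacing \<open>n p'\<close> by
  \<open>n'\<^sub>+\<close> in the denominator of an empirical class frequency \<open>S / n'\<^sub>+ \<le> 1\<close> changes it by at most
  \<open>\<bar>n'\<^sub>+ / n - p'\<bar> / p'\<close>, and likewise for the negative class with the same deviation, so the
  two risks differ by at most \<open>t (p / p' + (1 - p) / (1 - p')) \<le> t / \<epsilon>\<close>.\<close>

lemma abs_ratio_diff_le:
  fixes S k n r :: real
  assumes "0 \<le> S" "S \<le> k" "0 < n" "0 < r"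
  shows "\<bar>S / k - S / (n * r)\<bar> \<le> \<bar>k / n - r\<bar> / r"
proof (cases "k = 0")
  case True
  then show ?thesis using assms by simp
next
  case False
  then have "k > 0" using assms by simp
  then have "S / k - S / (n * r) = S / k * (r - k / n) / r"
    using assms by (simp add: field_simps)
  also have "\<bar>\<dots>\<bar> = S / k * \<bar>k / n - r\<bar> / r"
    using \<open>k > 0\<close> assms by (simp add: abs_mult abs_minus_commute)
  also have "\<dots> \<le> \<bar>k / n - r\<bar> / r"
    using \<open>k > 0\<close> assms by (intro divide_right_mono mult_left_le_one_le) auto
  finally show ?thesis .
qed

lemma card_pos_plus_card_neg_le:
  "card {i \<in> {..<n}. Y i \<omega> = (1::int)} + card {i \<in> {..<n}. Y i \<omega> = -1} \<le> n"
proof -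
  have "card {i \<in> {..<n}. Y i \<omega> = (1::int)} + card {i \<in> {..<n}. Y i \<omega> = -1}
      = card ({i \<in> {..<n}. Y i \<omega> = 1} \<union> {i \<in> {..<n}. Y i \<omega> = -1})"
    by (rule card_Un_disjoint[symmetric]) auto
  also have "\<dots> \<le> card {..<n}" by (rule card_mono) auto
  finally show ?thesis by simp
qed

lemma risk_what_risk_w_diff_le:
  assumes p: "0 \<le> p" "p \<le> 1" and "n > 0" and p': "0 < p'" "p' < 1"
  shows "\<bar>risk_what n p X Y g \<omega> - risk_w n p p' X Y g \<omega>\<bar>
           \<le> \<bar>real (npos n Y \<omega>) / real n - p'\<bar> * (p / p' + (1 - p) / (1 - p'))"
proof -
  define k where "k = npos n Y \<omega>"
  define S_pos :: real where "S_pos = (\<Sum>i \<in> {i \<in> {..<n}. Y i \<omega> = 1}. if g (X i \<omega>) = -1 then 1 else 0)"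
  define S_neg :: real where "S_neg = (\<Sum>i \<in> {i \<in> {..<n}. Y i \<omega> = -1}. if g (X i \<omega>) = 1 then 1 else 0)"
  define D where "D = \<bar>real k / real n - p'\<bar>"
  \<comment> \<open>labels other than \<open>\<plusminus>1\<close> are not excluded, so \<open>n - k\<close> only bounds the negative count\<close>
  have card_le: "card {i \<in> {..<n}. Y i \<omega> = -1} \<le> n - k" and "k \<le> n"
    using card_pos_plus_card_neg_le[of n Y \<omega>] by (simp_all add: k_def npos_def)
  have S_pos: "0 \<le> S_pos" "S_pos \<le> real k"
    unfolding S_pos_def k_def npos_def
    by (auto intro: sum_nonneg sum_bounded_above[where K = 1, simplified])
  have S_neg: "0 \<le> S_neg" "S_neg \<le> real (n - k)"
    unfolding S_neg_def using card_le
    by (auto intro!: sum_nonneg order_trans[OF sum_bounded_above[where K = 1, simplified]])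
  have pos: "\<bar>S_pos / real k - S_pos / (real n * p')\<bar> \<le> D / p'"
    unfolding D_def using S_pos \<open>n > 0\<close> p' by (intro abs_ratio_diff_le) auto
  have "real (n - k) / real n - (1 - p') = - (real k / real n - p')"
    using \<open>k \<le> n\<close> \<open>n > 0\<close> by (simp add: of_nat_diff field_simps)
  then have "\<bar>real (n - k) / real n - (1 - p')\<bar> = D"
    by (simp add: D_def)
  moreover have "\<bar>S_neg / real (n - k) - S_neg / (real n * (1 - p'))\<bar>
      \<le> \<bar>real (n - k) / real n - (1 - p')\<bar> / (1 - p')"
    using S_neg \<open>n > 0\<close> p' by (intro abs_ratio_diff_le) auto
  ultimately have neg: "\<bar>S_neg / real (n - k) - S_neg / (real n * (1 - p'))\<bar> \<le> D / (1 - p')"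
    by simp
  have "risk_what n p X Y g \<omega> = p * (S_pos / real k) + (1 - p) * (S_neg / real (n - k))"
    unfolding risk_what_def S_pos_def S_neg_def k_def by simp
  moreover have "risk_w n p p' X Y g \<omega>
      = p * (S_pos / (real n * p')) + (1 - p) * (S_neg / (real n * (1 - p')))"
    unfolding risk_w_def S_pos_def S_neg_def by (simp add: mult.commute)
  ultimately have "risk_what n p X Y g \<omega> - risk_w n p p' X Y g \<omega>
      = p * (S_pos / real k - S_pos / (real n * p'))
        + (1 - p) * (S_neg / real (n - k) - S_neg / (real n * (1 - p')))"
    by (simp add: right_diff_distrib)
  also have "\<bar>\<dots>\<bar> \<le> p * \<bar>S_pos / real k - S_pos / (real n * p')\<bar>
      + (1 - p) * \<bar>S_neg / real (n - k) - S_neg / (real n * (1 - p'))\<bar>"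
    using p by (metis abs_mult abs_of_nonneg abs_triangle_ineq diff_ge_0_iff_ge)
  also have "\<dots> \<le> p * (D / p') + (1 - p) * (D / (1 - p'))"
    using p pos neg by (intro add_mono mult_left_mono) auto
  finally show ?thesis by (simp add: D_def k_def distrib_left mult.commute)
qed

lemma risk_what_risk_w_diff_le_margin:
  assumes "0 \<le> p" "p \<le> 1" "n > 0" "0 < e" "e < p'" "p' < 1 - e"
    and dev: "\<bar>real (npos n Y \<omega>) / real n - p'\<bar> \<le> t"
  shows "\<bar>risk_what n p X Y g \<omega> - risk_w n p p' X Y g \<omega>\<bar> \<le> t / e"
proof -
  have "p / p' + (1 - p) / (1 - p') \<le> p / e + (1 - p) / e"
    using assms by (intro add_mono divide_left_mono) auto
  also have "\<dots> = 1 / e" by (simp add: add_divide_distrib[symmetric])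
  finally have weights: "p / p' + (1 - p) / (1 - p') \<le> 1 / e" .
  have "\<bar>risk_what n p X Y g \<omega> - risk_w n p p' X Y g \<omega>\<bar>
      \<le> \<bar>real (npos n Y \<omega>) / real n - p'\<bar> * (p / p' + (1 - p) / (1 - p'))"
    using assms by (intro risk_what_risk_w_diff_le) auto
  also have "\<dots> \<le> t * (1 / e)"
    using dev weights assms by (intro mult_mono) auto
  finally show ?thesis by simp
qed

lemma real_npos_eq_sum_indicator:
  "real (npos n Y \<omega>) = (\<Sum>i<n. indicator {1} (Y i \<omega>))"
  unfolding npos_def by (simp add: indicator_def sum.If_cases Int_def)

lemma npos_borel_measurable:
  assumes "\<And>i. i < n \<Longrightarrow> Y i \<in> measurable M (count_space UNIV)"
  shows "(\<lambda>\<omega>. real (npos n Y \<omega>)) \<in> borel_measurable M"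
  unfolding real_npos_eq_sum_indicator
  by (auto intro!: borel_measurable_sum measurable_compose[OF assms])

lemma (in prob_space) iid_snd_of_iid_pairs:
  assumes indep: "indep_vars (\<lambda>_. N \<Otimes>\<^sub>M K) (\<lambda>i \<omega>. (X i \<omega>, Y i \<omega>)) I"
    and ident: "\<And>i. i \<in> I \<Longrightarrow>
      distr M (N \<Otimes>\<^sub>M K) (\<lambda>\<omega>. (X i \<omega>, Y i \<omega>)) = distr M (N \<Otimes>\<^sub>M K) (\<lambda>\<omega>. (X' \<omega>, Y' \<omega>))"
    and XY'_meas: "(\<lambda>\<omega>. (X' \<omega>, Y' \<omega>)) \<in> measurable M (N \<Otimes>\<^sub>M K)"
  shows "indep_vars (\<lambda>_. K) Y I"
    and "\<And>i. i \<in> I \<Longrightarrow> distr M K (Y i) = distr M K Y'"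
proof -
  show "indep_vars (\<lambda>_. K) Y I"
    using indep_vars_compose2[OF indep, of "\<lambda>_. snd" "\<lambda>_. K"] by simp
  fix i assume "i \<in> I"
  then have XY_meas: "(\<lambda>\<omega>. (X i \<omega>, Y i \<omega>)) \<in> measurable M (N \<Otimes>\<^sub>M K)"
    using indep by (auto simp: indep_vars_def)
  show "distr M K (Y i) = distr M K Y'"
    using distr_distr[OF measurable_snd XY_meas] distr_distr[OF measurable_snd XY'_meas] ident[OF \<open>i \<in> I\<close>]
    by (simp add: comp_def)
qed

lemma (in prob_space) npos_deviation_prob_le:
  fixes Y :: "nat \<Rightarrow> 'a \<Rightarrow> int" and Y' :: "'a \<Rightarrow> int"
  assumes indep: "indep_vars (\<lambda>_. count_space UNIV) Y {..<n}"
    and ident: "\<And>i. i < n \<Longrightarrow> distr M (count_space UNIV) (Y i) = distr M (count_space UNIV) Y'"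
    and Y'_meas: "Y' \<in> measurable M (count_space UNIV)"
    and "n > 0" "t \<ge> 0"
  shows "prob {\<omega> \<in> space M. t \<le> \<bar>real (npos n Y \<omega>) / real n - prob {\<omega> \<in> space M. Y' \<omega> = 1}\<bar>}
           \<le> 2 * exp (-2 * real n * t\<^sup>2)"
proof -
  define Z where "Z = (\<lambda>i \<omega>. indicator {1} (Y i \<omega>) :: real)"
  define Z' where "Z' = (\<lambda>\<omega>. indicator {1} (Y' \<omega>) :: real)"
  have ind_meas: "(indicator {1} :: int \<Rightarrow> real) \<in> borel_measurable (count_space UNIV)"
    by simp
  interpret H: Hoeffding_ineq_iid M "{..<n}" Z Z' 0 1 "expectation Z'"
  proof unfold_locales
    show "indep_vars (\<lambda>_. borel) Z {..<n}"
      unfolding Z_def using indep_vars_compose2[OF indep, of "\<lambda>_. indicator {1}" "\<lambda>_. borel"] by simp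
    show "distr M borel (Z i) = distr M borel Z'" if "i \<in> {..<n}" for i
    proof -
      have Y_meas: "Y i \<in> measurable M (count_space UNIV)"
        using indep that by (auto simp: indep_vars_def)
      show ?thesis
        using distr_distr[OF ind_meas Y_meas] distr_distr[OF ind_meas Y'_meas] ident that
        by (simp add: Z_def Z'_def comp_def)
    qed
    show "random_variable borel Z'"
      unfolding Z'_def using measurable_compose[OF Y'_meas ind_meas] .
  qed (auto simp: Z'_def)
  have "{\<omega> \<in> space M. Y' \<omega> = 1} \<in> events"
    using Y'_meas by measurable
  moreover have "expectation Z' = expectation (indicator {\<omega> \<in> space M. Y' \<omega> = 1})"
    by (rule Bochner_Integration.integral_cong) (auto simp: Z'_def indicator_def)
  ultimately have "expectation Z' = prob {\<omega> \<in> space M. Y' \<omega> = 1}"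
    by simp
  then show ?thesis
    using H.Hoeffding_ineq_abs_ge'[of t] \<open>n > 0\<close> \<open>t \<ge> 0\<close>
    by (simp add: Z_def real_npos_eq_sum_indicator lessThan_empty_iff)
qed

theorem lemma2:
  fixes M :: "'w measure" and N :: "'a measure"
    and G :: "('a \<Rightarrow> int) set"
    and X :: "nat \<Rightarrow> 'w \<Rightarrow> 'a" and Y :: "nat \<Rightarrow> 'w \<Rightarrow> int"
    and X' :: "'w \<Rightarrow> 'a" and Y' :: "'w \<Rightarrow> int"
    and p \<epsilon> \<delta> :: real and n :: nat
  assumes "prob_space M"
    and G_meas: "\<And>g. g \<in> G \<Longrightarrow> g \<in> measurable N (count_space UNIV)"
    and G_vals: "\<And>g x. g \<in> G \<Longrightarrow> x \<in> space N \<Longrightarrow> g x \<in> {-1, 1}"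
    and p: "0 < p" "p < 1"
    and X'_meas: "X' \<in> measurable M N"
    and Y'_meas: "Y' \<in> measurable M (count_space UNIV)"
    and Y'_vals: "\<And>\<omega>. \<omega> \<in> space M \<Longrightarrow> Y' \<omega> \<in> {-1, 1}"
    and indep: "prob_space.indep_vars M (\<lambda>_. N \<Otimes>\<^sub>M count_space UNIV)
                  (\<lambda>i \<omega>. (X i \<omega>, Y i \<omega>)) {..<n}"
    and ident: "\<And>i. i < n \<Longrightarrow>
                  distr M (N \<Otimes>\<^sub>M count_space UNIV) (\<lambda>\<omega>. (X i \<omega>, Y i \<omega>))
                = distr M (N \<Otimes>\<^sub>M count_space UNIV) (\<lambda>\<omega>. (X' \<omega>, Y' \<omega>))"
    and eps: "0 < \<epsilon>" "\<epsilon> < 1/2"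
    and p'_range: "\<epsilon> < measure M {\<omega> \<in> space M. Y' \<omega> = 1}"
                  "measure M {\<omega> \<in> space M. Y' \<omega> = 1} < 1 - \<epsilon>"
    and delta: "0 < \<delta>" "\<delta> < 1"
    and n_large: "real n \<ge> 2 * ln (2 / \<delta>) / \<epsilon>^2"
  shows "\<exists>A \<in> sets M. measure M A \<ge> 1 - \<delta> \<and>
           (\<forall>\<omega> \<in> A.
              (SUP g \<in> G. ereal \<bar>risk_what n p X Y g \<omega>
                               - risk_w n p (measure M {\<omega> \<in> space M. Y' \<omega> = 1}) X Y g \<omega>\<bar>)
              \<le> ereal (2 / \<epsilon>^2 * sqrt (ln (2 / \<delta>) / (2 * real n))))"
proof -
  interpret prob_space M by fact
  define p' where "p' = measure M {\<omega> \<in> space M. Y' \<omega> = 1}"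
  define t where "t = sqrt (ln (2 / \<delta>) / (2 * real n))"
  define B where "B = {\<omega> \<in> space M. t \<le> \<bar>real (npos n Y \<omega>) / real n - p'\<bar>}"
  have "ln (2 / \<delta>) > 0" using delta by simp
  then have "2 * ln (2 / \<delta>) / \<epsilon>^2 > 0" using eps by simp
  with n_large have "n > 0" by linarith
  have "t \<ge> 0" unfolding t_def using \<open>ln (2 / \<delta>) > 0\<close> by simp
  have Y_indep: "indep_vars (\<lambda>_. count_space UNIV) Y {..<n}"
    and Y_ident: "\<And>i. i \<in> {..<n} \<Longrightarrow> distr M (count_space UNIV) (Y i) = distr M (count_space UNIV) Y'"
    using iid_snd_of_iid_pairs[OF indep] ident measurable_Pair[OF X'_meas Y'_meas] by auto
  have "(\<lambda>\<omega>. real (npos n Y \<omega>)) \<in> borel_measurable M"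
    using Y_indep by (intro npos_borel_measurable) (auto simp: indep_vars_def)
  then have "B \<in> sets M"
    unfolding B_def by measurable
  moreover have "prob B \<le> \<delta>"
  proof -
    have "prob B \<le> 2 * exp (-2 * real n * t\<^sup>2)"
      unfolding B_def p'_def using Y_indep Y_ident Y'_meas \<open>n > 0\<close> \<open>t \<ge> 0\<close>
      by (intro npos_deviation_prob_le) auto
    also have "\<dots> = \<delta>"
      using \<open>n > 0\<close> \<open>ln (2 / \<delta>) > 0\<close> delta by (simp add: t_def exp_minus)
    finally show ?thesis .
  qed
  ultimately have "space M - B \<in> sets M" "measure M (space M - B) \<ge> 1 - \<delta>"
    by (auto simp: prob_compl)
  moreover have "\<bar>risk_what n p X Y g \<omega> - risk_w n p p' X Y g \<omega>\<bar> \<le> 2 / \<epsilon>^2 * t"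
    if "\<omega> \<in> space M - B" for g \<omega>
  proof -
    have "\<bar>risk_what n p X Y g \<omega> - risk_w n p p' X Y g \<omega>\<bar> \<le> t / \<epsilon>"
      using that p eps p'_range \<open>n > 0\<close> unfolding B_def p'_def
      by (intro risk_what_risk_w_diff_le_margin) auto
    also have "\<dots> \<le> 2 / \<epsilon>^2 * t"
      using eps \<open>t \<ge> 0\<close> mult_right_mono[of \<epsilon> 2 t] by (simp add: field_simps power2_eq_square)
    finally show ?thesis .
  qed
  ultimately show ?thesis
    unfolding p'_def[symmetric] t_def[symmetric]
    by (intro bexI[of _ "space M - B"] conjI ballI SUP_least) auto
qed

end
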